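(* Consider the weighted-median opinion dynamics on a row-stochastic influence matrix $W$ with node set $V=\{1,\dots,n\}$. Suppose the only nonempty maximal cohesive set is $V$ itself. Then for every initial condition $x(0)\in\mathbb R^n$, the solution $x(t)$ almost surely converges (in finite time) to a consensus equilibrium, i.e. a vector with all entries equal.
   Context: A matrix $W=(w_{ij})_{n\times n}$ is row-stochastic if $w_{ij}\ge 0$ for all $i,j$ and $\sum_{j=1}^n w_{ij}=1$ for every $i$. A set $M\subseteq V$ is cohesive if $\sum_{j\in M} w_{ij}\ge 1/2$ for every $i\in M$. A cohesive set $M$ is maximal cohesive if there is no $i\in V\setminus M$ with $\sum_{j\in M} w_{ij}>1/2$. A weighted median of $x\in\mathbb R^n$ with respect to row $i$ of $W$ is any $y\in\{x_1,\dots,x_n\}$ satisfying $\sum_{j:\,x_j<y}w_{ij}\le 1/2$ and $\sum_{j:\,x_j>y}w_{ij}\le 1/2$. $\mathrm{Med}_i(x;W)$ denotes this weighted median when it is unique. When it is not unique, $\mathrm{Med}_i(x;W)$ denotes the weighted median closest to $x_i$, which is then uniquely determined. Weighted-median opinion dynamics: given $x(0)\in\mathbb R^n$, at each time step $t+1$ ($t=0,1,2,\dots$) an index $i$ is drawn uniformly at random from $\{1,\dots,n\}$, independently of the past. Then $x_i(t+1)=\mathrm{Med}_i(x(t);W)$ and $x_j(t+1)=x_j(t)$ for $j\ne i$. *)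

theory Defs
  imports "HOL-Probability.Probability"
begin

text \<open>Nodes are the elements of a finite type 'n (so V = UNIV); W i j is the weight w_ij.\<close>

definition row_stochastic :: "('n::finite \<Rightarrow> 'n \<Rightarrow> real) \<Rightarrow> bool" where
  "row_stochastic W \<longleftrightarrow> (\<forall>i j. W i j \<ge> 0) \<and> (\<forall>i. (\<Sum>j\<in>UNIV. W i j) = 1)"

definition cohesive :: "('n::finite \<Rightarrow> 'n \<Rightarrow> real) \<Rightarrow> 'n set \<Rightarrow> bool" where
  "cohesive W M \<longleftrightarrow> (\<forall>i\<in>M. (\<Sum>j\<in>M. W i j) \<ge> 1/2)"

definition maximal_cohesive :: "('n::finite \<Rightarrow> 'n \<Rightarrow> real) \<Rightarrow> 'n set \<Rightarrow> bool" where
  "maximal_cohesive W M \<longleftrightarrow> cohesive W M \<and> \<not> (\<exists>i\<in>UNIV - M. (\<Sum>j\<in>M. W i j) > 1/2)"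

definition wmedians :: "('n::finite \<Rightarrow> 'n \<Rightarrow> real) \<Rightarrow> ('n \<Rightarrow> real) \<Rightarrow> 'n \<Rightarrow> real set" where
  "wmedians W x i = {y \<in> range x. (\<Sum>j | x j < y. W i j) \<le> 1/2 \<and> (\<Sum>j | x j > y. W i j) \<le> 1/2}"

text \<open>Med_i(x;W): the weighted median closest to x_i (equals the unique one when unique).\<close>
definition Med :: "('n::finite \<Rightarrow> 'n \<Rightarrow> real) \<Rightarrow> ('n \<Rightarrow> real) \<Rightarrow> 'n \<Rightarrow> real" where
  "Med W x i = (THE y. y \<in> wmedians W x i \<and> (\<forall>z\<in>wmedians W x i. \<bar>y - x i\<bar> \<le> \<bar>z - x i\<bar>))"

text \<open>Trajectory of the dynamics along a sequence of drawn indices \<omega> (\<omega> !! t is drawn at step t+1).\<close>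
fun traj :: "('n::finite \<Rightarrow> 'n \<Rightarrow> real) \<Rightarrow> ('n \<Rightarrow> real) \<Rightarrow> 'n stream \<Rightarrow> nat \<Rightarrow> ('n \<Rightarrow> real)" where
  "traj W x0 \<omega> 0 = x0"
| "traj W x0 \<omega> (Suc t) = (let x = traj W x0 \<omega> t; i = \<omega> !! t in x(i := Med W x i))"

definition index_space :: "'n::finite stream measure" where
  "index_space = stream_space (measure_pmf (pmf_of_set (UNIV :: 'n set)))"

end

theory Submission
  imports Defs
begin

text \<open>
  Along any trajectory the entries stay in the finite set of initial values, so the dynamics
  is a finite-state process. From every state some finite word of updates reaches consensus:
  updating top-valued nodes that put less than half of their weight on the top level set
  either empties it (one value fewer) or leaves it cohesive; a cohesive top level set then
  absorbs, one at a time, every node putting more than half of its weight on it, until it is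
  maximal cohesive and hence all of V. Concatenating such words yields a single word driving
  every reachable state to consensus. A uniform i.i.d. index sequence contains this word
  almost surely, and consensus vectors are fixed points of every update.
\<close>

lemma row_sum_mono:
  fixes W :: "'n::finite \<Rightarrow> 'n \<Rightarrow> real"
  assumes "row_stochastic W" "A \<subseteq> B"
  shows "(\<Sum>j\<in>A. W i j) \<le> (\<Sum>j\<in>B. W i j)"
  using assms by (intro sum_mono2) (auto simp: row_stochastic_def)

lemma row_sum_Compl:
  fixes W :: "'n::finite \<Rightarrow> 'n \<Rightarrow> real"
  assumes "row_stochastic W"
  shows "(\<Sum>j\<in>-A. W i j) = 1 - (\<Sum>j\<in>A. W i j)"
proof -
  have "(\<Sum>j\<in>-A. W i j) = (\<Sum>j\<in>UNIV. W i j) - (\<Sum>j\<in>A. W i j)"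
    by (simp add: Compl_eq_Diff_UNIV sum_diff)
  then show ?thesis
    using assms by (simp add: row_stochastic_def)
qed

lemma cohesive_insert:
  fixes W :: "'n::finite \<Rightarrow> 'n \<Rightarrow> real"
  assumes "row_stochastic W" "cohesive W M" "(\<Sum>j\<in>M. W i j) \<ge> 1/2"
  shows "cohesive W (insert i M)"
  unfolding cohesive_def
proof
  fix k assume "k \<in> insert i M"
  then have "(\<Sum>j\<in>M. W k j) \<ge> 1/2"
    using assms(2,3) by (auto simp: cohesive_def)
  moreover have "(\<Sum>j\<in>M. W k j) \<le> (\<Sum>j\<in>insert i M. W k j)"
    using assms(1) by (rule row_sum_mono) auto
  ultimately show "(\<Sum>j\<in>insert i M. W k j) \<ge> 1/2" by simp
qed

lemma wmedians_subset_range: "wmedians W x i \<subseteq> range x"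
  unfolding wmedians_def by auto

text \<open>The witness is the lower weighted median: the least value \<open>v\<close> with
  \<open>\<Sum>j | x j \<le> v. W i j \<ge> 1/2\<close>.\<close>
lemma wmedians_nonempty:
  fixes W :: "'n::finite \<Rightarrow> 'n \<Rightarrow> real"
  assumes rs: "row_stochastic W"
  shows "wmedians W x i \<noteq> {}"
proof -
  define C where "C = {v\<in>range x. (\<Sum>j | x j \<le> v. W i j) \<ge> 1/2}"
  have "{j. x j \<le> Max (range x)} = UNIV" by auto
  then have "(\<Sum>j | x j \<le> Max (range x). W i j) = 1"
    using rs by (simp only:) (simp add: row_stochastic_def)
  moreover have "Max (range x) \<in> range x"
    by (intro Max_in) auto
  ultimately have "Max (range x) \<in> C"
    unfolding C_def by simp
  then have "C \<noteq> {}" by blast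
  have "finite C" by (simp add: C_def)
  define y where "y = Min C"
  have yC: "y \<in> C"
    using \<open>C \<noteq> {}\<close> \<open>finite C\<close> by (simp add: y_def)
  have "(\<Sum>j | x j > y. W i j) = 1 - (\<Sum>j | x j \<le> y. W i j)"
    using row_sum_Compl[OF rs, where A = "{j. x j \<le> y}"] by (simp add: Compl_eq not_le)
  then have above: "(\<Sum>j | x j > y. W i j) \<le> 1/2"
    using yC by (simp add: C_def)
  have below: "(\<Sum>j | x j < y. W i j) \<le> 1/2"
  proof (rule ccontr)
    assume heavy: "\<not> ?thesis"
    then have "{j. x j < y} \<noteq> {}" by force
    define v where "v = Max {u\<in>range x. u < y}"
    have v: "v \<in> range x" "v < y"
      using Max_in[of "{u\<in>range x. u < y}"] \<open>{j. x j < y} \<noteq> {}\<close> by (auto simp: v_def)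
    have "x j \<le> v" if "x j < y" for j
      unfolding v_def using that by (intro Max_ge) auto
    then have "{j. x j \<le> v} = {j. x j < y}"
      using v(2) by force
    then have "v \<in> C"
      using heavy v by (simp add: C_def)
    then show False
      using Min_le[OF \<open>finite C\<close>] v(2) unfolding y_def by fastforce
  qed
  have "y \<in> wmedians W x i"
    using yC above below by (simp add: C_def wmedians_def)
  then show ?thesis by auto
qed

lemma wmedians_interval:
  fixes W :: "'n::finite \<Rightarrow> 'n \<Rightarrow> real"
  assumes rs: "row_stochastic W"
    and "lo \<in> wmedians W x i" "hi \<in> wmedians W x i" "lo \<le> v" "v \<le> hi" "v \<in> range x"
  shows "v \<in> wmedians W x i"
proof -
  have "(\<Sum>j | x j < v. W i j) \<le> (\<Sum>j | x j < hi. W i j)"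
    using \<open>v \<le> hi\<close> by (intro row_sum_mono[OF rs]) auto
  moreover have "(\<Sum>j | x j > v. W i j) \<le> (\<Sum>j | x j > lo. W i j)"
    using \<open>lo \<le> v\<close> by (intro row_sum_mono[OF rs]) auto
  ultimately show ?thesis
    using assms(2,3,6) by (auto simp: wmedians_def)
qed

text \<open>
  Two distinct medians closest to \<open>x i\<close> lie on opposite sides of it, which makes \<open>x i\<close>
  itself a median; so the description in \<open>Med\<close> has exactly one solution.
\<close>
lemma Med_in_wmedians:
  fixes W :: "'n::finite \<Rightarrow> 'n \<Rightarrow> real"
  assumes rs: "row_stochastic W"
  shows "Med W x i \<in> wmedians W x i"
proof -
  let ?M = "wmedians W x i"
  let ?closest = "\<lambda>y. y \<in> ?M \<and> (\<forall>z\<in>?M. \<bar>y - x i\<bar> \<le> \<bar>z - x i\<bar>)"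
  have fin: "finite ?M"
    using wmedians_subset_range by (rule finite_subset) simp
  define d where "d = Min ((\<lambda>z. \<bar>z - x i\<bar>) ` ?M)"
  have dmin: "\<forall>z\<in>?M. d \<le> \<bar>z - x i\<bar>"
    using fin by (simp add: d_def)
  have "d \<in> (\<lambda>z. \<bar>z - x i\<bar>) ` ?M"
    unfolding d_def using fin wmedians_nonempty[OF rs, of x i] by (intro Min_in) auto
  then obtain y where y: "y \<in> ?M" "\<bar>y - x i\<bar> = d" by auto
  have closest_y: "?closest y"
    using y dmin by simp
  have unique: "y2 = y" if y2: "?closest y2" for y2
  proof (rule ccontr)
    assume "y2 \<noteq> y"
    have "\<bar>y2 - x i\<bar> \<le> \<bar>y - x i\<bar>"
      using y2 y(1) by blast
    moreover have "d \<le> \<bar>y2 - x i\<bar>"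
      using dmin y2 by blast
    ultimately have "y2 - x i = y - x i \<or> y2 - x i = - (y - x i)"
      using y(2) abs_eq_iff by (metis order.antisym)
    then have opposite: "y2 - x i = - (y - x i)"
      using \<open>y2 \<noteq> y\<close> by simp
    have "y2 \<in> ?M"
      using y2 by simp
    have "x i \<in> ?M"
    proof (cases "y \<le> y2")
      case True
      then have "y \<le> x i" "x i \<le> y2"
        using opposite by linarith+
      then show ?thesis
        using wmedians_interval[OF rs y(1) \<open>y2 \<in> ?M\<close>] by simp
    next
      case False
      then have "y2 \<le> x i" "x i \<le> y"
        using opposite by linarith+
      then show ?thesis
        using wmedians_interval[OF rs \<open>y2 \<in> ?M\<close> y(1)] by simp
    qed
    then have "d \<le> 0"
      using dmin by force
    then show False
      using opposite y(2) \<open>y2 \<noteq> y\<close> by simp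
  qed
  have "Med W x i = y"
    unfolding Med_def using closest_y unique by (rule the_equality)
  then show ?thesis
    using y(1) by simp
qed

lemma Med_in_range:
  fixes W :: "'n::finite \<Rightarrow> 'n \<Rightarrow> real"
  assumes "row_stochastic W"
  shows "Med W x i \<in> range x"
  using Med_in_wmedians[OF assms] wmedians_subset_range by blast

lemma Med_less_top:
  fixes W :: "'n::finite \<Rightarrow> 'n \<Rightarrow> real"
  assumes rs: "row_stochastic W" and top: "\<forall>j. x j \<le> a"
    and light: "(\<Sum>j | x j = a. W i j) < 1/2"
  shows "Med W x i < a"
proof -
  have "Med W x i \<le> a"
    using Med_in_range[OF rs, of x i] top by auto
  moreover have "Med W x i \<noteq> a"
  proof
    assume "Med W x i = a"
    then have "(\<Sum>j | x j < a. W i j) \<le> 1/2"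
      using Med_in_wmedians[OF rs, of x i] by (simp add: wmedians_def)
    moreover have "{j. x j < a} = - {j. x j = a}"
      using top by (auto simp: order_less_le)
    ultimately show False
      using row_sum_Compl[OF rs, where A = "{j. x j = a}"] light by simp
  qed
  ultimately show ?thesis by simp
qed

lemma Med_eq_top:
  fixes W :: "'n::finite \<Rightarrow> 'n \<Rightarrow> real"
  assumes rs: "row_stochastic W" and top: "\<forall>j. x j \<le> a"
    and heavy: "(\<Sum>j | x j = a. W i j) > 1/2"
  shows "Med W x i = a"
proof (rule ccontr)
  assume "Med W x i \<noteq> a"
  moreover have "Med W x i \<le> a"
    using Med_in_range[OF rs, of x i] top by auto
  ultimately have "(\<Sum>j | x j = a. W i j) \<le> (\<Sum>j | x j > Med W x i. W i j)"
    by (intro row_sum_mono[OF rs]) auto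
  also have "\<dots> \<le> 1/2"
    using Med_in_wmedians[OF rs, of x i] by (simp add: wmedians_def)
  finally show False
    using heavy by simp
qed

definition upd :: "('n::finite \<Rightarrow> 'n \<Rightarrow> real) \<Rightarrow> ('n \<Rightarrow> real) \<Rightarrow> 'n \<Rightarrow> ('n \<Rightarrow> real)" where
  "upd W x i = x(i := Med W x i)"

abbreviation run :: "('n::finite \<Rightarrow> 'n \<Rightarrow> real) \<Rightarrow> ('n \<Rightarrow> real) \<Rightarrow> 'n list \<Rightarrow> ('n \<Rightarrow> real)" where
  "run W \<equiv> foldl (upd W)"

definition consensus :: "('n \<Rightarrow> real) \<Rightarrow> bool" where
  "consensus x \<longleftrightarrow> (\<exists>c. \<forall>i. x i = c)"

lemma range_upd_subset:
  fixes W :: "'n::finite \<Rightarrow> 'n \<Rightarrow> real"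
  assumes "row_stochastic W"
  shows "range (upd W x i) \<subseteq> range x"
  using Med_in_range[OF assms, of x i] by (auto simp: upd_def)

lemma range_run_subset:
  fixes W :: "'n::finite \<Rightarrow> 'n \<Rightarrow> real"
  assumes "row_stochastic W"
  shows "range (run W x ws) \<subseteq> range x"
proof (induction ws arbitrary: x)
  case (Cons i ws)
  then show ?case
    using range_upd_subset[OF assms, of x i] by (metis foldl_Cons subset_trans)
qed simp

lemma upd_consensus:
  fixes W :: "'n::finite \<Rightarrow> 'n \<Rightarrow> real"
  assumes "row_stochastic W" "consensus x"
  shows "upd W x i = x"
  using Med_in_range[OF assms(1), of x i] assms(2) by (auto simp: consensus_def upd_def)

lemma run_consensus:
  fixes W :: "'n::finite \<Rightarrow> 'n \<Rightarrow> real"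
  assumes "row_stochastic W" "consensus x"
  shows "run W x ws = x"
  using assms(2) by (induction ws) (simp_all add: upd_consensus[OF assms(1)])

lemma range_subset_bounded:
  assumes "range y \<subseteq> range x" "\<forall>j. x j \<le> a"
  shows "y j \<le> a"
  using assms by (metis rangeE rangeI subsetD)

lemma exists_run_top_level_cohesive:
  fixes W :: "'n::finite \<Rightarrow> 'n \<Rightarrow> real"
  assumes rs: "row_stochastic W" and "\<forall>j. x j \<le> a"
  shows "\<exists>ws. range (run W x ws) \<subseteq> range x \<and>
           ({j. run W x ws j = a} = {} \<or> cohesive W {j. run W x ws j = a})"
  using assms(2)
proof (induction "card {j. x j = a}" arbitrary: x rule: less_induct)
  case less
  let ?S = "{j. x j = a}"
  show ?case
  proof (cases "?S = {} \<or> cohesive W ?S")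
    case True
    then show ?thesis by (intro exI[of _ "[]"]) simp
  next
    case False
    then obtain i where "x i = a" and light: "(\<Sum>j\<in>?S. W i j) < 1/2"
      unfolding cohesive_def by force
    define x' where "x' = upd W x i"
    have "Med W x i < a"
      using Med_less_top[OF rs less.prems light] .
    then have "{j. x' j = a} = ?S - {i}"
      by (auto simp: x'_def upd_def)
    moreover have "card (?S - {i}) < card ?S"
      using \<open>x i = a\<close> by (intro card_Diff1_less) auto
    ultimately have "card {j. x' j = a} < card ?S"
      by simp
    moreover have range': "range x' \<subseteq> range x"
      unfolding x'_def by (rule range_upd_subset[OF rs])
    moreover have "\<forall>j. x' j \<le> a"
      using range_subset_bounded[OF range'] less.prems by blast
    ultimately obtain ws where "range (run W x' ws) \<subseteq> range x'"
        "{j. run W x' ws j = a} = {} \<or> cohesive W {j. run W x' ws j = a}"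
      using less.hyps by blast
    moreover have "run W x (i # ws) = run W x' ws"
      by (simp add: x'_def)
    ultimately show ?thesis
      using range' by (metis subset_trans)
  qed
qed

lemma exists_run_cohesive_top_consensus:
  fixes W :: "'n::finite \<Rightarrow> 'n \<Rightarrow> real"
  assumes rs: "row_stochastic W"
    and only_V: "\<forall>M. M \<noteq> {} \<and> maximal_cohesive W M \<longrightarrow> M = UNIV"
    and "\<forall>j. x j \<le> a" "{j. x j = a} \<noteq> {}" "cohesive W {j. x j = a}"
  shows "\<exists>ws. consensus (run W x ws)"
  using assms(3-5)
proof (induction "card {j. x j \<noteq> a}" arbitrary: x rule: less_induct)
  case less
  let ?S = "{j. x j = a}"
  show ?case
  proof (cases "maximal_cohesive W ?S")
    case True
    then have "?S = UNIV"
      using only_V less.prems(2) by simp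
    then have "consensus x"
      unfolding consensus_def by (metis UNIV_I mem_Collect_eq)
    then show ?thesis by (intro exI[of _ "[]"]) simp
  next
    case False
    then obtain i where "x i \<noteq> a" and heavy: "(\<Sum>j\<in>?S. W i j) > 1/2"
      using less.prems(3) unfolding maximal_cohesive_def by blast
    define x' where "x' = upd W x i"
    have "Med W x i = a"
      using Med_eq_top[OF rs less.prems(1) heavy] .
    then have top': "{j. x' j = a} = insert i ?S" and rest': "{j. x' j \<noteq> a} = {j. x j \<noteq> a} - {i}"
      by (auto simp: x'_def upd_def)
    have "card {j. x' j \<noteq> a} < card {j. x j \<noteq> a}"
      unfolding rest' using \<open>x i \<noteq> a\<close> by (intro card_Diff1_less) auto
    moreover have "\<forall>j. x' j \<le> a"
      using less.prems(1) \<open>Med W x i = a\<close> by (simp add: x'_def upd_def)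
    moreover have "cohesive W {j. x' j = a}"
      unfolding top' using cohesive_insert[OF rs less.prems(3)] heavy by simp
    ultimately obtain ws where "consensus (run W x' ws)"
      using less.hyps[of x'] top' by blast
    then show ?thesis
      by (intro exI[of _ "i # ws"]) (simp add: x'_def)
  qed
qed

lemma exists_run_consensus:
  fixes W :: "'n::finite \<Rightarrow> 'n \<Rightarrow> real"
  assumes rs: "row_stochastic W"
    and only_V: "\<forall>M. M \<noteq> {} \<and> maximal_cohesive W M \<longrightarrow> M = UNIV"
  shows "\<exists>ws. consensus (run W x ws)"
proof (induction "card (range x)" arbitrary: x rule: less_induct)
  case less
  define a where "a = Max (range x)"
  have top: "\<forall>j. x j \<le> a"
    by (simp add: a_def)
  obtain ws where "range (run W x ws) \<subseteq> range x"
    and "{j. run W x ws j = a} = {} \<or> cohesive W {j. run W x ws j = a}"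
    using exists_run_top_level_cohesive[OF rs top] by blast
  moreover define x' where "x' = run W x ws"
  ultimately have range': "range x' \<subseteq> range x"
    and level: "{j. x' j = a} = {} \<or> cohesive W {j. x' j = a}"
    by simp_all
  have "\<exists>ws'. consensus (run W x' ws')"
  proof (cases "{j. x' j = a} = {}")
    case True
    have "a \<in> range x"
      unfolding a_def by (intro Max_in) auto
    moreover have "a \<notin> range x'"
      using True by blast
    ultimately have "range x' \<subset> range x"
      using range' by blast
    then have "card (range x') < card (range x)"
      by (intro psubset_card_mono) auto
    then show ?thesis
      using less.hyps by blast
  next
    case False
    moreover have "\<forall>j. x' j \<le> a"
      using range_subset_bounded[OF range'] top by blast
    ultimately show ?thesis
      using exists_run_cohesive_top_consensus[OF rs only_V] level by blast
  qed
  then show ?case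
    unfolding x'_def by (metis foldl_append)
qed

lemma exists_synchronizing_word:
  fixes W :: "'n::finite \<Rightarrow> 'n \<Rightarrow> real"
  assumes rs: "row_stochastic W"
    and only_V: "\<forall>M. M \<noteq> {} \<and> maximal_cohesive W M \<longrightarrow> M = UNIV"
    and "finite X"
  shows "\<exists>U. \<forall>x\<in>X. consensus (run W x U)"
  using \<open>finite X\<close>
proof (induction X rule: finite_induct)
  case empty
  then show ?case by simp
next
  case (insert x X)
  then obtain U where U: "\<forall>z\<in>X. consensus (run W z U)" by blast
  obtain ws where "consensus (run W (run W x U) ws)"
    using exists_run_consensus[OF rs only_V] by blast
  then have "\<forall>z\<in>insert x X. consensus (run W z (U @ ws))"
    using U by (simp add: run_consensus[OF rs])
  then show ?case by blast
qed

lemma traj_Suc_upd: "traj W x0 \<omega> (Suc t) = upd W (traj W x0 \<omega> t) (\<omega> !! t)"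
  by (simp add: upd_def Let_def)

lemma traj_add_eq_run: "traj W x0 \<omega> (t + k) = run W (traj W x0 \<omega> t) (stake k (sdrop t \<omega>))"
proof (induction k arbitrary: t)
  case (Suc k)
  have "traj W x0 \<omega> (t + Suc k) = traj W x0 \<omega> (Suc t + k)"
    by simp
  also have "\<dots> = run W (traj W x0 \<omega> (Suc t)) (stake k (sdrop (Suc t) \<omega>))"
    by (rule Suc.IH)
  finally show ?case
    by (simp only: traj_Suc_upd) simp
qed simp

lemma range_traj_subset:
  fixes W :: "'n::finite \<Rightarrow> 'n \<Rightarrow> real"
  assumes "row_stochastic W"
  shows "range (traj W x0 \<omega> t) \<subseteq> range x0"
  using range_run_subset[OF assms, of x0 "stake t \<omega>"] traj_add_eq_run[of W x0 \<omega> 0 t] by simp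

lemma traj_consensus_stable:
  fixes W :: "'n::finite \<Rightarrow> 'n \<Rightarrow> real"
  assumes "row_stochastic W" "consensus (traj W x0 \<omega> t)" "t \<le> s"
  shows "traj W x0 \<omega> s = traj W x0 \<omega> t"
proof -
  have "traj W x0 \<omega> s = traj W x0 \<omega> (t + (s - t))"
    using assms(3) by simp
  also have "\<dots> = run W (traj W x0 \<omega> t) (stake (s - t) (sdrop t \<omega>))"
    by (rule traj_add_eq_run)
  also have "\<dots> = traj W x0 \<omega> t"
    by (rule run_consensus[OF assms(1,2)])
  finally show ?thesis .
qed

lemma finite_funs_range_subset:
  assumes "finite R"
  shows "finite {x :: 'n::finite \<Rightarrow> 'a. range x \<subseteq> R}"
  using finite_set_of_finite_funs[OF finite_class.finite_UNIV assms] by (simp add: image_subset_iff)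

abbreviation iid :: "'a::countable pmf \<Rightarrow> 'a stream measure" where
  "iid p \<equiv> stream_space (measure_pmf p)"

lemma space_iid [simp]: "space (iid p) = UNIV"
  by (simp add: space_stream_space)

lemma prob_space_iid: "prob_space (iid p)"
  by (rule prob_space.prob_space_stream_space[OF prob_space_measure_pmf])

lemma sets_iid_stake_sdrop:
  assumes "F \<in> sets (iid p)"
  shows "{\<omega>. stake L \<omega> \<in> A \<and> sdrop L \<omega> \<in> F} \<in> sets (iid p)"
proof -
  note assms[measurable]
  have "{\<omega>\<in>space (iid p). stake L \<omega> \<in> A \<and> sdrop L \<omega> \<in> F} \<in> sets (iid p)"
    by measurable
  then show ?thesis by simp
qed

lemma sets_iid_stake: "{\<omega>. stake L \<omega> \<in> A} \<in> sets (iid p)"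
  using sets_iid_stake_sdrop[OF sets.top[of "iid p"]] by simp

lemma emeasure_iid_Stream:
  assumes "X \<in> sets (iid p)"
  shows "emeasure (iid p) X = (\<integral>\<^sup>+t. emeasure (iid p) {\<omega>. t ## \<omega> \<in> X} \<partial>p)"
  using prob_space.emeasure_stream_space[OF prob_space_measure_pmf assms] by simp

lemma emeasure_iid_stake_sdrop:
  assumes F: "F \<in> sets (iid p)"
  shows "emeasure (iid p) {\<omega>. stake L \<omega> \<in> A \<and> sdrop L \<omega> \<in> F}
       = emeasure (iid p) {\<omega>. stake L \<omega> \<in> A} * emeasure (iid p) F"
proof (induction L arbitrary: A)
  case 0
  have "emeasure (iid p) UNIV = 1"
    using prob_space.emeasure_space_1[OF prob_space_iid] by simp
  then show ?case
    by (cases "[] \<in> A") simp_all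
next
  case (Suc L)
  have shift: "{\<omega>. t ## \<omega> \<in> {\<omega>. stake (Suc L) \<omega> \<in> A \<and> sdrop (Suc L) \<omega> \<in> G}}
      = {\<omega>. stake L \<omega> \<in> (#) t -` A \<and> sdrop L \<omega> \<in> G}" for t G
    by simp
  have "emeasure (iid p) {\<omega>. stake (Suc L) \<omega> \<in> A \<and> sdrop (Suc L) \<omega> \<in> F}
      = (\<integral>\<^sup>+t. emeasure (iid p) {\<omega>. stake L \<omega> \<in> (#) t -` A \<and> sdrop L \<omega> \<in> F} \<partial>p)"
    by (simp only: emeasure_iid_Stream[OF sets_iid_stake_sdrop[OF F]] shift)
  also have "\<dots> = (\<integral>\<^sup>+t. emeasure (iid p) {\<omega>. stake L \<omega> \<in> (#) t -` A} * emeasure (iid p) F \<partial>p)"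
    by (intro nn_integral_cong Suc.IH)
  also have "\<dots> = (\<integral>\<^sup>+t. emeasure (iid p) {\<omega>. stake L \<omega> \<in> (#) t -` A} \<partial>p) * emeasure (iid p) F"
    by (rule nn_integral_multc) simp
  also have "(\<integral>\<^sup>+t. emeasure (iid p) {\<omega>. stake L \<omega> \<in> (#) t -` A} \<partial>p)
      = emeasure (iid p) {\<omega>. stake (Suc L) \<omega> \<in> A}"
    using emeasure_iid_Stream[OF sets_iid_stake, of p "Suc L" A] by simp
  finally show ?case .
qed

lemma emeasure_iid_prefix:
  "emeasure (iid p) {\<omega>. stake (length U) \<omega> = U} = ennreal (prod_list (map (pmf p) U))"
proof (induction U)
  case Nil
  then show ?case
    using prob_space.emeasure_space_1[OF prob_space_iid] by simp
next
  case (Cons u U)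
  let ?E = "emeasure (iid p) {\<omega>. stake (length U) \<omega> = U}"
  have "emeasure (iid p) {\<omega>. t ## \<omega> \<in> {\<omega>. stake (length (u # U)) \<omega> \<in> {u # U}}}
      = ?E * indicator {u} t" for t
    by (cases "t = u") simp_all
  then have "emeasure (iid p) {\<omega>. stake (length (u # U)) \<omega> = u # U}
      = (\<integral>\<^sup>+t. ?E * indicator {u} t \<partial>p)"
    using emeasure_iid_Stream[OF sets_iid_stake, of p "length (u # U)" "{u # U}"] by simp
  also have "\<dots> = ?E * pmf p u"
    by (simp add: nn_integral_cmult_indicator emeasure_pmf_single)
  finally show ?case
    using Cons.IH by (simp add: ennreal_mult' mult.commute)
qed

fun avoiding_blocks :: "'a list \<Rightarrow> nat \<Rightarrow> 'a stream set" where
  "avoiding_blocks U 0 = UNIV"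
| "avoiding_blocks U (Suc m) =
     {\<omega>. stake (length U) \<omega> \<in> - {U} \<and> sdrop (length U) \<omega> \<in> avoiding_blocks U m}"

lemma sets_avoiding_blocks: "avoiding_blocks U m \<in> sets (iid p)"
proof (induction m)
  case 0
  then show ?case
    using sets.top[of "iid p"] by simp
next
  case (Suc m)
  then show ?case
    by (simp only: avoiding_blocks.simps) (rule sets_iid_stake_sdrop)
qed

lemma measure_avoiding_blocks:
  "measure (iid p) (avoiding_blocks U m) = (1 - measure (iid p) {\<omega>. stake (length U) \<omega> = U}) ^ m"
proof (induction m)
  case 0
  then show ?case
    using prob_space.prob_space[OF prob_space_iid] by simp
next
  case (Suc m)
  interpret prob_space "iid p"
    by (rule prob_space_iid)
  let ?P = "{\<omega>. stake (length U) \<omega> = U}"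
  have "emeasure (iid p) (avoiding_blocks U (Suc m))
      = emeasure (iid p) {\<omega>. stake (length U) \<omega> \<in> - {U}} * emeasure (iid p) (avoiding_blocks U m)"
    by (simp only: avoiding_blocks.simps) (rule emeasure_iid_stake_sdrop[OF sets_avoiding_blocks])
  then have "measure (iid p) (avoiding_blocks U (Suc m))
      = measure (iid p) {\<omega>. stake (length U) \<omega> \<in> - {U}} * measure (iid p) (avoiding_blocks U m)"
    by (simp add: measure_def enn2real_mult)
  moreover have "{\<omega>. stake (length U) \<omega> \<in> - {U}} = space (iid p) - ?P"
    by auto
  then have "measure (iid p) {\<omega>. stake (length U) \<omega> \<in> - {U}} = 1 - measure (iid p) ?P"
    using prob_compl[OF sets_iid_stake[of _ "{U}"]] by simp
  ultimately show ?case
    using Suc.IH by simp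
qed

lemma never_occurs_subset_avoiding_blocks:
  assumes "\<forall>t. stake (length U) (sdrop t \<omega>) \<noteq> U"
  shows "\<omega> \<in> avoiding_blocks U m"
  using assms
proof (induction m arbitrary: \<omega>)
  case (Suc m)
  have "\<forall>t. stake (length U) (sdrop t (sdrop (length U) \<omega>)) \<noteq> U"
    using Suc.prems by (metis sdrop_add)
  then show ?case
    using Suc.IH Suc.prems[rule_format, of 0] by simp
qed simp

text \<open>Disjoint blocks of length \<open>length U\<close> are independent, so the probability that
  none of the first \<open>m\<close> equals \<open>U\<close> decays geometrically.\<close>
lemma AE_iid_word_occurs:
  fixes U :: "'a::countable list"
  assumes "\<forall>u\<in>set U. pmf p u > 0"
  shows "AE \<omega> in iid p. \<exists>t. stake (length U) (sdrop t \<omega>) = U"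
proof -
  interpret prob_space "iid p"
    by (rule prob_space_iid)
  define N where "N = (\<Inter>m. avoiding_blocks U m)"
  define q where "q = measure (iid p) {\<omega>. stake (length U) \<omega> = U}"
  have "prod_list (map (pmf p) U) > 0"
    using assms by (induction U) auto
  then have "q > 0"
    using emeasure_iid_prefix[of p U] by (simp add: q_def measure_def)
  moreover have "q \<le> 1"
    unfolding q_def by (rule prob_le_1)
  ultimately have "(\<lambda>m. (1 - q) ^ m) \<longlonglongrightarrow> 0"
    by (intro LIMSEQ_power_zero) simp
  moreover have "measure (iid p) N \<le> (1 - q) ^ m" for m
  proof -
    have "measure (iid p) N \<le> measure (iid p) (avoiding_blocks U m)"
      unfolding N_def by (intro finite_measure_mono sets_avoiding_blocks) auto
    then show ?thesis
      by (simp add: measure_avoiding_blocks q_def)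
  qed
  ultimately have "measure (iid p) N \<le> 0"
    using LIMSEQ_le_const by blast
  moreover have "N \<in> sets (iid p)"
    unfolding N_def using sets_avoiding_blocks[of U _ p] by (intro sets.countable_INT') auto
  ultimately have "N \<in> null_sets (iid p)"
    by (simp add: emeasure_eq_measure null_sets_def measure_le_0_iff)
  moreover have "{\<omega>\<in>space (iid p). \<not> (\<exists>t. stake (length U) (sdrop t \<omega>) = U)} \<subseteq> N"
    unfolding N_def using never_occurs_subset_avoiding_blocks by blast
  ultimately show ?thesis
    by (rule AE_I')
qed

theorem mainTheorem8:
  fixes W :: "'n::finite \<Rightarrow> 'n \<Rightarrow> real" and x0 :: "'n \<Rightarrow> real"
  assumes "row_stochastic W"
    and "\<forall>M. M \<noteq> {} \<and> maximal_cohesive W M \<longrightarrow> M = UNIV"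
  shows "AE \<omega> in (index_space :: 'n stream measure).
           \<exists>T c. \<forall>t\<ge>T. \<forall>i. traj W x0 \<omega> t i = c"
proof -
  obtain U where U: "\<forall>x\<in>{x. range x \<subseteq> range x0}. consensus (run W x U)"
    using exists_synchronizing_word[OF assms finite_funs_range_subset[of "range x0"]] by auto
  have "AE \<omega> in (index_space :: 'n stream measure). \<exists>t. stake (length U) (sdrop t \<omega>) = U"
    unfolding index_space_def by (rule AE_iid_word_occurs) simp
  then show ?thesis
  proof (rule eventually_mono)
    fix \<omega> assume "\<exists>t. stake (length U) (sdrop t \<omega>) = U"
    then obtain t where "stake (length U) (sdrop t \<omega>) = U" by blast
    then have "traj W x0 \<omega> (t + length U) = run W (traj W x0 \<omega> t) U"
      by (simp only: traj_add_eq_run)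
    moreover have "consensus (run W (traj W x0 \<omega> t) U)"
      using U range_traj_subset[OF assms(1), of x0 \<omega> t] by blast
    ultimately have synced: "consensus (traj W x0 \<omega> (t + length U))"
      by simp
    then obtain c where c: "\<forall>i. traj W x0 \<omega> (t + length U) i = c"
      unfolding consensus_def by blast
    have "traj W x0 \<omega> s i = c" if "t + length U \<le> s" for s i
      using traj_consensus_stable[OF assms(1) synced that] c by simp
    then show "\<exists>T c. \<forall>s\<ge>T. \<forall>i. traj W x0 \<omega> s i = c" by blast
  qed
qed

end
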